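(* Let $s\ge1$. If $f\in C^2(\mathbb{R}^s)$ and $H_n(f)<\infty$ for some $n\in\mathbb{N}_0$, then for any $n_0\in\mathbb{N}_0$ there exists a constant $C>0$ depending only on $n_0$ and $f$ such that $$\left|\sum_{\alpha\in\mathbb{Z}^s}2^{-ns}\left|\nabla f(x_\alpha^n)\right|_2-\int_{\mathbb{R}^s}|\nabla f(x)|_2\,dx\right|\le C\,2^{-n}\int_{\mathbb{R}^s}\left|D^2f(x)\right|_F\,dx\qquad\text{for all }n\ge n_0.$$
   Context: $x_\alpha^n:=2^{-n}(\alpha+\frac12(1,\dots,1))$ for $n\in\mathbb{N}_0$, $\alpha\in\mathbb{Z}^s$; $|\cdot|_2$ is the Euclidean norm. $|D^2f(x)|_F:=\big(\sum_{j,k=1}^s(\partial^2f(x)/\partial x_j\partial x_k)^2\big)^{1/2}$, and $H_n(f):=\sum_{\alpha\in\mathbb{Z}^s}2^{-ns}\max_{x\in x_\alpha^n+2^{-n}[-\frac12,\frac12]^s}|D^2f(x)|_F$ (possibly $+\infty$). *)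

theory Defs
  imports "HOL-Analysis.Analysis"
begin

definition grid_pt :: "nat \<Rightarrow> int ^ 'n \<Rightarrow> real ^ 'n" where
  "grid_pt n \<alpha> = inverse (2 ^ n) *\<^sub>R (\<chi> j. real_of_int (\<alpha> $ j) + 1 / 2)"

definition grid_cube :: "nat \<Rightarrow> int ^ 'n \<Rightarrow> (real ^ 'n) set" where
  "grid_cube n \<alpha> = {y. \<forall>j. \<bar>y $ j - grid_pt n \<alpha> $ j\<bar> \<le> inverse (2 ^ n) / 2}"

definition frob :: "real ^ 'n ^ 'n \<Rightarrow> real" where
  "frob M = sqrt (\<Sum>j\<in>UNIV. \<Sum>k\<in>UNIV. (M $ j $ k)\<^sup>2)"

text \<open>H_n(f), given the Hessian field Hs of f; value in [0,\<infinity>].\<close>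
definition Hn :: "nat \<Rightarrow> (real ^ 'n \<Rightarrow> real ^ 'n ^ 'n) \<Rightarrow> ennreal" where
  "Hn n Hs = (\<Sum>\<^sub>\<infinity>\<alpha>\<in>(UNIV :: (int ^ 'n) set).
      ennreal (inverse (2 ^ (n * CARD('n))) * (SUP x\<in>grid_cube n \<alpha>. frob (Hs x))))"

end

theory Submission
  imports Defs
begin

text \<open>
Cut space into the half-open dyadic cells of side 2^-n. The grid sum is then the integral of the
step function equal to |\<nabla>f(x_\<alpha>^n)| on the cell of \<alpha>. On a closed cube the gradient is
Lipschitz with constant the supremum of |D^2 f|_F there (the Frobenius norm dominates the operator
norm), and the cube has diameter at most s 2^-n; so the step function differs from |\<nabla>f| by at
most s 2^-n times the step function of these suprema, whose integral is H_n(f). As H_n(f)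
decreases in n, the error is at most s 2^-n H_m(f) for all n \<ge> m, and the finitely many coarser
levels only enlarge the constant (their grid sums converge because distinct coarse grid points lie
in distinct fine cubes). Finally the constant is divided by the integral of |D^2 f|_F, which
vanishes only if the Hessian does; then the integrable gradient is constant, hence zero.
\<close>

lemma ennreal_infsum:
  fixes w :: "'a \<Rightarrow> real"
  assumes "w summable_on A" and "\<And>x. x \<in> A \<Longrightarrow> 0 \<le> w x"
  shows "ennreal (infsum w A) = (\<Sum>\<^sub>\<infinity>x\<in>A. ennreal (w x))"
proof -
  have "ennreal (infsum w A) = (SUP F\<in>{F. finite F \<and> F \<subseteq> A}. ennreal (sum w F))"
    by (rule infsum_nonneg_is_SUPREMUM_ennreal[OF assms])
  also have "\<dots> = (SUP F\<in>{F. finite F \<and> F \<subseteq> A}. (\<Sum>x\<in>F. ennreal (w x)))"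
    using assms(2) by (intro SUP_cong) (auto intro!: sum_ennreal[symmetric])
  also have "\<dots> = (\<Sum>\<^sub>\<infinity>x\<in>A. ennreal (w x))"
    by (simp add: nonneg_infsum_complete)
  finally show ?thesis .
qed

lemma summable_on_iff_infsum_ennreal_finite:
  fixes w :: "'a \<Rightarrow> real"
  assumes nonneg: "\<And>x. x \<in> A \<Longrightarrow> 0 \<le> w x"
  shows "w summable_on A \<longleftrightarrow> (\<Sum>\<^sub>\<infinity>x\<in>A. ennreal (w x)) < \<infinity>"
proof
  assume "w summable_on A"
  then show "(\<Sum>\<^sub>\<infinity>x\<in>A. ennreal (w x)) < \<infinity>"
    by (simp flip: ennreal_infsum[OF _ nonneg])
next
  let ?T = "\<Sum>\<^sub>\<infinity>x\<in>A. ennreal (w x)"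
  assume fin: "?T < \<infinity>"
  have "sum w F \<le> enn2real ?T" if "finite F" "F \<subseteq> A" for F
  proof -
    have "ennreal (sum w F) = (\<Sum>x\<in>F. ennreal (w x))"
      using that nonneg by (auto intro!: sum_ennreal[symmetric])
    also have "\<dots> \<le> ?T"
      using that by (auto simp: nonneg_infsum_complete intro!: SUP_upper)
    finally have "enn2real (ennreal (sum w F)) \<le> enn2real ?T"
      using fin by (intro enn2real_mono) simp_all
    then show ?thesis
      using that nonneg by (simp add: subset_iff sum_nonneg)
  qed
  then show "w summable_on A"
    by (intro nonneg_bdd_above_summable_on nonneg) (auto simp: bdd_above_def)
qed

lemma nn_integral_count_space_eq_infsum:
  fixes w :: "'a \<Rightarrow> real"
  assumes nonneg: "\<And>x. x \<in> A \<Longrightarrow> 0 \<le> w x"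
  shows "(\<integral>\<^sup>+x. ennreal (w x) \<partial>count_space A) = (\<Sum>\<^sub>\<infinity>x\<in>A. ennreal (w x))"
proof (cases "w summable_on A")
  case True
  then have "Infinite_Set_Sum.abs_summable_on w A"
    using abs_summable_equivalent summable_on_iff_abs_summable_on_real by blast
  then show ?thesis
    using nonneg by (simp add: nn_integral_conv_infsetsum infsetsum_infsum ennreal_infsum[OF True])
next
  case False
  then have "\<not> integrable (count_space A) w"
    using abs_summable_equivalent summable_on_iff_abs_summable_on_real abs_summable_on_def by blast
  moreover have "(\<integral>\<^sup>+x. ennreal \<bar>w x\<bar> \<partial>count_space A) = (\<integral>\<^sup>+x. ennreal (w x) \<partial>count_space A)"
    using nonneg by (intro nn_integral_cong) simp
  ultimately have "(\<integral>\<^sup>+x. ennreal (w x) \<partial>count_space A) = \<infinity>"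
    by (simp add: integrable_iff_bounded less_top[symmetric])
  moreover have "\<not> (\<Sum>\<^sub>\<infinity>x\<in>A. ennreal (w x)) < \<infinity>"
    using False nonneg summable_on_iff_infsum_ennreal_finite[of A w] by blast
  ultimately show ?thesis
    by (simp add: less_top[symmetric])
qed

text \<open>The index of the half-open cell 2^-n (\<alpha> + [0,1)^s) containing y; its closure is grid_cube n \<alpha>.\<close>

definition dyadic_cell :: "nat \<Rightarrow> real ^ 'n \<Rightarrow> int ^ 'n" where
  "dyadic_cell n y = (\<chi> j. \<lfloor>2 ^ n * y $ j\<rfloor>)"

lemma mem_grid_cube_iff:
  "y \<in> grid_cube n \<alpha> \<longleftrightarrow>
    (\<forall>j. of_int (\<alpha> $ j) \<le> 2 ^ n * y $ j \<and> 2 ^ n * y $ j \<le> of_int (\<alpha> $ j) + 1)"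
proof -
  have "\<bar>y $ j - grid_pt n \<alpha> $ j\<bar> \<le> inverse (2 ^ n) / 2 \<longleftrightarrow>
        of_int (\<alpha> $ j) \<le> 2 ^ n * y $ j \<and> 2 ^ n * y $ j \<le> of_int (\<alpha> $ j) + 1" for j
  proof -
    have eq: "y $ j - grid_pt n \<alpha> $ j = (2 ^ n * y $ j - (of_int (\<alpha> $ j) + 1 / 2)) / 2 ^ n"
      by (simp add: grid_pt_def field_simps)
    show ?thesis
      unfolding eq abs_divide by (auto simp: field_simps abs_le_iff)
  qed
  then show ?thesis
    unfolding grid_cube_def mem_Collect_eq by presburger
qed

lemma grid_cube_eq_cbox:
  "grid_cube n \<alpha> = cbox (\<chi> j. of_int (\<alpha> $ j) / 2 ^ n) (\<chi> j. (of_int (\<alpha> $ j) + 1) / 2 ^ n)"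
  by (auto simp: mem_grid_cube_iff mem_box_cart field_simps)

lemma grid_pt_mem_grid_cube: "grid_pt n \<alpha> \<in> grid_cube n \<alpha>"
  by (simp add: grid_cube_def)

lemma mem_grid_cube_dyadic_cell: "y \<in> grid_cube n (dyadic_cell n y)"
  by (auto simp: mem_grid_cube_iff dyadic_cell_def)

lemma dyadic_cell_grid_pt: "dyadic_cell n (grid_pt n \<alpha>) = \<alpha>"
proof -
  have "dyadic_cell n (grid_pt n \<alpha>) $ j = \<alpha> $ j" for j
  proof -
    have "2 ^ n * grid_pt n \<alpha> $ j = of_int (\<alpha> $ j) + 1 / 2"
      by (simp add: grid_pt_def)
    then show ?thesis
      unfolding dyadic_cell_def vec_lambda_beta by (intro floor_unique) auto
  qed
  then show ?thesis
    by (simp add: vec_eq_iff)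
qed

lemma dyadic_cell_coarsen:
  assumes "m \<le> n"
  shows "dyadic_cell m y $ j = dyadic_cell n y $ j div 2 ^ (n - m)"
proof -
  have "(2::real) ^ n = 2 ^ (n - m) * 2 ^ m"
    using assms by (simp flip: power_add)
  then have "\<lfloor>(2::real) ^ m * y $ j\<rfloor> = \<lfloor>2 ^ n * y $ j / of_int (2 ^ (n - m))\<rfloor>"
    by simp
  also have "\<dots> = \<lfloor>2 ^ n * y $ j\<rfloor> div 2 ^ (n - m)"
    by (rule floor_divide_real_eq_div) simp
  finally show ?thesis
    by (simp add: dyadic_cell_def)
qed

lemma unit_interval_div_pow2:
  fixes t :: real
  assumes "of_int a \<le> 2 ^ k * t" "2 ^ k * t \<le> of_int a + 1"
  shows "of_int (a div 2 ^ k) \<le> t \<and> t \<le> of_int (a div 2 ^ k) + 1"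
proof -
  define d r where "d = a div 2 ^ k" and "r = a mod 2 ^ k"
  have "0 \<le> r" "r < 2 ^ k"
    unfolding r_def by simp_all
  moreover have "a = 2 ^ k * d + r"
    unfolding d_def r_def by (simp add: mult_div_mod_eq)
  ultimately have "of_int a = 2 ^ k * of_int d + (of_int r :: real)" "0 \<le> (of_int r :: real)"
    "of_int r + 1 \<le> (2 ^ k :: real)"
    using of_int_le_iff[of "r + 1" "2 ^ k", where 'a=real] by simp_all
  with assms have "2 ^ k * of_int d \<le> 2 ^ k * t" "2 ^ k * t \<le> 2 ^ k * (of_int d + 1)"
    unfolding distrib_left by linarith+
  then show ?thesis
    unfolding d_def by simp
qed

lemma grid_cube_dyadic_cell_antimono:
  assumes "m \<le> n"
  shows "grid_cube n (dyadic_cell n y) \<subseteq> grid_cube m (dyadic_cell m y)"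
proof
  fix z assume z: "z \<in> grid_cube n (dyadic_cell n y)"
  have "(2::real) ^ n * z $ j = 2 ^ (n - m) * (2 ^ m * z $ j)" for j
    using assms by (simp add: power_add[symmetric])
  with z show "z \<in> grid_cube m (dyadic_cell m y)"
    by (auto simp: mem_grid_cube_iff dyadic_cell_coarsen[OF assms] intro!: unit_interval_div_pow2)
qed

lemma inj_dyadic_cell_grid_pt:
  assumes "n \<le> m"
  shows "inj (\<lambda>\<alpha>. dyadic_cell m (grid_pt n \<alpha>))"
proof (rule injI)
  fix a b assume "dyadic_cell m (grid_pt n a) = dyadic_cell m (grid_pt n b)"
  then have "dyadic_cell n (grid_pt n a) $ j = dyadic_cell n (grid_pt n b) $ j" for j
    by (simp add: dyadic_cell_coarsen[OF assms])
  then show "a = b"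
    by (simp add: vec_eq_iff dyadic_cell_grid_pt)
qed

lemma norm_diff_grid_cube_le:
  fixes x y :: "real ^ 'n"
  assumes "x \<in> grid_cube n \<alpha>" "y \<in> grid_cube n \<alpha>"
  shows "norm (x - y) \<le> CARD('n) / 2 ^ n"
proof -
  have "2 ^ n * \<bar>(x - y) $ j\<bar> \<le> 1" for j
  proof -
    have "2 ^ n * \<bar>(x - y) $ j\<bar> = \<bar>2 ^ n * x $ j - 2 ^ n * y $ j\<bar>"
      by (simp add: abs_mult flip: right_diff_distrib)
    then show ?thesis
      using assms by (auto simp: mem_grid_cube_iff abs_le_iff dest!: spec[of _ j])
  qed
  then have "\<bar>(x - y) $ j\<bar> \<le> 1 / 2 ^ n" for j
    by (simp add: field_simps)
  then have "(\<Sum>j\<in>UNIV. \<bar>(x - y) $ j\<bar>) \<le> CARD('n) / 2 ^ n"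
    using sum_bounded_above[of UNIV "\<lambda>j. \<bar>(x - y) $ j\<bar>" "1 / 2 ^ n"] by simp
  then show ?thesis
    using norm_le_l1_cart[of "x - y"] by linarith
qed

lemma dyadic_cell_vimage:
  "dyadic_cell n -` {\<alpha>} =
    {y. \<forall>j. of_int (\<alpha> $ j) \<le> 2 ^ n * y $ j \<and> 2 ^ n * y $ j < of_int (\<alpha> $ j) + 1}"
  by (auto simp: dyadic_cell_def vec_eq_iff floor_eq_iff)

lemma measurable_dyadic_cell[measurable]: "dyadic_cell n \<in> lborel \<rightarrow>\<^sub>M count_space UNIV"
  unfolding measurable_count_space_eq2_countable dyadic_cell_vimage
  by (auto simp: dyadic_cell_def)

lemma sets_dyadic_cell_vimage[simp, measurable]: "dyadic_cell n -` {\<alpha>} \<in> sets borel"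
  using measurable_sets[OF measurable_dyadic_cell, of "{\<alpha>}" n] by simp

lemma emeasure_dyadic_cell_vimage:
  "emeasure lborel (dyadic_cell n -` {\<alpha>}) = ennreal (inverse (2 ^ (n * CARD('n))))"
    for \<alpha> :: "int ^ 'n"
proof -
  define l u :: "real ^ 'n"
    where "l = (\<chi> j. of_int (\<alpha> $ j) / 2 ^ n)" and "u = (\<chi> j. (of_int (\<alpha> $ j) + 1) / 2 ^ n)"
  have "box l u \<subseteq> dyadic_cell n -` {\<alpha>}" "dyadic_cell n -` {\<alpha>} \<subseteq> cbox l u"
    by (auto simp: dyadic_cell_vimage l_def u_def mem_box_cart field_simps less_imp_le)
  then have "AE y in lborel. y \<in> dyadic_cell n -` {\<alpha>} \<longleftrightarrow> y \<in> cbox l u"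
    using AE_not_in[OF null_sets_cbox_Diff_box[of l u]] by (auto elim!: AE_mp)
  then have "emeasure lborel (dyadic_cell n -` {\<alpha>}) = emeasure lborel (cbox l u)"
    by (rule emeasure_eq_AE) simp_all
  also have "\<dots> = ennreal (measure lborel (cbox l u))"
    using emeasure_lborel_cbox_finite[of l u] by (intro emeasure_eq_ennreal_measure) (simp add: less_top)
  also have "measure lborel (cbox l u) = (\<Prod>j\<in>(UNIV :: 'n set). inverse (2 ^ n))"
  proof -
    have "l \<in> cbox l u"
      by (simp add: l_def u_def mem_box_cart divide_right_mono)
    then show ?thesis
      by (subst content_cbox_cart) (auto simp: l_def u_def field_simps)
  qed
  finally show ?thesis
    by (simp add: power_mult power_inverse)
qed

lemma nn_integral_dyadic_step:
  fixes w :: "int ^ 'n \<Rightarrow> real"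
  assumes nonneg: "\<And>\<alpha>. 0 \<le> w \<alpha>"
  shows "(\<integral>\<^sup>+y. ennreal (w (dyadic_cell n y)) \<partial>lborel)
       = (\<Sum>\<^sub>\<infinity>\<alpha>. ennreal (inverse (2 ^ (n * CARD('n))) * w \<alpha>))"
proof -
  have "ennreal (w (dyadic_cell n y))
      = (\<integral>\<^sup>+\<alpha>. ennreal (w \<alpha>) * indicator (dyadic_cell n -` {\<alpha>}) y \<partial>count_space UNIV)" for y
    by (subst nn_integral_count_space'[of "{dyadic_cell n y}"]) auto
  then have "(\<integral>\<^sup>+y. ennreal (w (dyadic_cell n y)) \<partial>lborel)
      = (\<integral>\<^sup>+\<alpha>. (\<integral>\<^sup>+y. ennreal (w \<alpha>) * indicator (dyadic_cell n -` {\<alpha>}) y \<partial>lborel) \<partial>count_space UNIV)"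
    by (simp add: nn_integral_count_space_nn_integral)
  also have "\<dots> = (\<integral>\<^sup>+\<alpha>. ennreal (inverse (2 ^ (n * CARD('n))) * w \<alpha>) \<partial>count_space UNIV)"
    by (simp add: nn_integral_cmult_indicator emeasure_dyadic_cell_vimage nonneg ennreal_mult' mult.commute)
  also have "\<dots> = (\<Sum>\<^sub>\<infinity>\<alpha>. ennreal (inverse (2 ^ (n * CARD('n))) * w \<alpha>))"
    by (rule nn_integral_count_space_eq_infsum) (simp add: nonneg)
  finally show ?thesis .
qed

lemma
  fixes w :: "int ^ 'n \<Rightarrow> real"
  assumes nonneg: "\<And>\<alpha>. 0 \<le> w \<alpha>" and int: "integrable lborel (\<lambda>y. w (dyadic_cell n y))"
  shows summable_dyadic_step: "(\<lambda>\<alpha>. inverse (2 ^ (n * CARD('n))) * w \<alpha>) summable_on UNIV"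
    and integral_dyadic_step:
      "(\<integral>y. w (dyadic_cell n y) \<partial>lborel) = (\<Sum>\<^sub>\<infinity>\<alpha>. inverse (2 ^ (n * CARD('n))) * w \<alpha>)"
proof -
  have nn: "(\<integral>\<^sup>+y. ennreal (w (dyadic_cell n y)) \<partial>lborel)
      = (\<Sum>\<^sub>\<infinity>\<alpha>. ennreal (inverse (2 ^ (n * CARD('n))) * w \<alpha>))"
    by (rule nn_integral_dyadic_step[OF nonneg])
  moreover have "(\<integral>\<^sup>+y. ennreal (w (dyadic_cell n y)) \<partial>lborel) < \<infinity>"
    using int by (simp add: integrable_iff_bounded nonneg)
  ultimately show sum: "(\<lambda>\<alpha>. inverse (2 ^ (n * CARD('n))) * w \<alpha>) summable_on UNIV"
    by (simp add: summable_on_iff_infsum_ennreal_finite nonneg)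
  have "(\<integral>y. w (dyadic_cell n y) \<partial>lborel) = enn2real (\<integral>\<^sup>+y. ennreal (w (dyadic_cell n y)) \<partial>lborel)"
    using nonneg by (intro integral_eq_nn_integral) (simp_all add: measurable_compose[OF measurable_dyadic_cell])
  also have "\<dots> = (\<Sum>\<^sub>\<infinity>\<alpha>. inverse (2 ^ (n * CARD('n))) * w \<alpha>)"
    unfolding nn using nonneg by (simp flip: ennreal_infsum[OF sum] add: infsum_nonneg)
  finally show "(\<integral>y. w (dyadic_cell n y) \<partial>lborel) = (\<Sum>\<^sub>\<infinity>\<alpha>. inverse (2 ^ (n * CARD('n))) * w \<alpha>)" .
qed

lemma frob_eq_norm: "frob A = norm A"
  by (simp add: frob_def norm_vec_def L2_set_def sum_nonneg)

lemma norm_matrix_vector_mult_le: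
  fixes A :: "real ^ 'n ^ 'm"
  shows "norm (A *v x) \<le> norm A * norm x"
proof -
  have "norm (A *v x) = L2_set (\<lambda>i. \<bar>A $ i \<bullet> x\<bar>) UNIV"
    by (simp add: norm_vec_def matrix_mult_dot)
  also have "\<dots> \<le> L2_set (\<lambda>i. norm (A $ i) * norm x) UNIV"
    by (intro L2_set_mono Cauchy_Schwarz_ineq2) simp
  also have "\<dots> = norm A * norm x"
    unfolding L2_set_left_distrib[OF norm_ge_zero, symmetric] by (simp only: norm_vec_def[of A])
  finally show ?thesis .
qed

lemma onorm_matrix_vector_mult_le:
  fixes A :: "real ^ 'n ^ 'm"
  shows "onorm ((*v) A) \<le> norm A"
  by (rule onorm_le) (rule norm_matrix_vector_mult_le)

lemma pow2_bound_from_eventual: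
  fixes D :: "nat \<Rightarrow> real"
  assumes "\<And>n. m \<le> n \<Longrightarrow> D n \<le> K / 2 ^ n"
  obtains B where "\<And>n. D n \<le> B / 2 ^ n"
proof
  define B where "B = max 0 K + (\<Sum>k<m. 2 ^ k * \<bar>D k\<bar>)"
  have head_nonneg: "0 \<le> (\<Sum>k<m. 2 ^ k * \<bar>D k\<bar>)"
    by (simp add: sum_nonneg)
  fix n
  show "D n \<le> B / 2 ^ n"
  proof (cases "m \<le> n")
    case True
    have "K \<le> B"
      using head_nonneg by (simp add: B_def)
    then show ?thesis
      by (intro order_trans[OF assms[OF True]] divide_right_mono) simp_all
  next
    case False
    then have "2 ^ n * \<bar>D n\<bar> \<le> (\<Sum>k<m. 2 ^ k * \<bar>D k\<bar>)"
      by (intro member_le_sum) auto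
    also have "\<dots> \<le> B"
      by (simp add: B_def)
    finally have "2 ^ n * \<bar>D n\<bar> \<le> B" .
    moreover have "2 ^ n * D n \<le> 2 ^ n * \<bar>D n\<bar>"
      by (rule mult_left_mono) simp_all
    ultimately have "2 ^ n * D n \<le> B"
      by linarith
    then show ?thesis
      by (simp add: pos_le_divide_eq mult.commute)
  qed
qed

definition riemann_term :: "(real ^ 'n \<Rightarrow> real ^ 'n) \<Rightarrow> nat \<Rightarrow> int ^ 'n \<Rightarrow> real" where
  "riemann_term g n \<alpha> = inverse (2 ^ (n * CARD('n))) * norm (g (grid_pt n \<alpha>))"

definition cube_sup :: "(real ^ 'n \<Rightarrow> real ^ 'n ^ 'n) \<Rightarrow> nat \<Rightarrow> int ^ 'n \<Rightarrow> real" where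
  "cube_sup Hs n \<alpha> = (SUP x\<in>grid_cube n \<alpha>. frob (Hs x))"

context
  fixes Hs :: "real ^ 'n \<Rightarrow> real ^ 'n ^ 'n"
  assumes cont: "continuous_on UNIV Hs"
begin

lemma continuous_on_frob: "continuous_on A (\<lambda>x. frob (Hs x))"
  unfolding frob_eq_norm by (intro continuous_on_norm continuous_on_subset[OF cont]) auto

lemma frob_le_cube_sup: "x \<in> grid_cube n \<alpha> \<Longrightarrow> frob (Hs x) \<le> cube_sup Hs n \<alpha>"
  unfolding cube_sup_def
  by (intro cSUP_upper bounded_imp_bdd_above compact_imp_bounded compact_continuous_image
      continuous_on_frob) (simp_all add: grid_cube_eq_cbox)

lemma cube_sup_nonneg: "0 \<le> cube_sup Hs n \<alpha>"
  using frob_le_cube_sup[OF grid_pt_mem_grid_cube] by (rule order_trans[rotated]) (simp add: frob_eq_norm)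

lemma cube_sup_dyadic_cell_antimono:
  assumes "m \<le> n"
  shows "cube_sup Hs n (dyadic_cell n y) \<le> cube_sup Hs m (dyadic_cell m y)"
  unfolding cube_sup_def[of _ n]
  using mem_grid_cube_dyadic_cell[of y n] grid_cube_dyadic_cell_antimono[OF assms, of y]
  by (intro cSUP_least frob_le_cube_sup) auto

lemma Hn_eq_nn_integral: "Hn n Hs = (\<integral>\<^sup>+y. ennreal (cube_sup Hs n (dyadic_cell n y)) \<partial>lborel)"
  unfolding Hn_def cube_sup_def[symmetric]
  by (rule nn_integral_dyadic_step[OF cube_sup_nonneg, symmetric])

lemma Hn_antimono: "m \<le> n \<Longrightarrow> Hn n Hs \<le> Hn m Hs"
  unfolding Hn_eq_nn_integral by (intro nn_integral_mono ennreal_leI cube_sup_dyadic_cell_antimono)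

lemma cube_sup_summable:
  "Hn n Hs < \<infinity> \<Longrightarrow> (\<lambda>\<alpha>. inverse (2 ^ (n * CARD('n))) * cube_sup Hs n \<alpha>) summable_on UNIV"
  unfolding Hn_def cube_sup_def[symmetric]
  by (subst summable_on_iff_infsum_ennreal_finite) (simp_all add: cube_sup_nonneg)

lemma
  assumes "Hn n Hs < \<infinity>"
  shows integrable_cube_sup_step: "integrable lborel (\<lambda>y. cube_sup Hs n (dyadic_cell n y))"
    and integral_cube_sup_step: "(\<integral>y. cube_sup Hs n (dyadic_cell n y) \<partial>lborel) = enn2real (Hn n Hs)"
proof -
  have meas: "(\<lambda>y. cube_sup Hs n (dyadic_cell n y)) \<in> borel_measurable lborel"
    by (rule measurable_compose[OF measurable_dyadic_cell]) simp
  show "integrable lborel (\<lambda>y. cube_sup Hs n (dyadic_cell n y))"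
    using assms by (intro integrableI_nonneg meas) (simp_all add: cube_sup_nonneg Hn_eq_nn_integral)
  show "(\<integral>y. cube_sup Hs n (dyadic_cell n y) \<partial>lborel) = enn2real (Hn n Hs)"
    by (simp add: integral_eq_nn_integral[OF meas] cube_sup_nonneg Hn_eq_nn_integral)
qed

lemma integrable_frob_hessian:
  assumes "Hn n Hs < \<infinity>"
  shows "integrable lborel (\<lambda>x. frob (Hs x))"
proof (rule Bochner_Integration.integrable_bound[OF integrable_cube_sup_step[OF assms]])
  show "(\<lambda>x. frob (Hs x)) \<in> borel_measurable lborel"
    by (simp add: borel_measurable_continuous_onI continuous_on_frob)
  show "AE x in lborel. norm (frob (Hs x)) \<le> norm (cube_sup Hs n (dyadic_cell n x))"
    using frob_le_cube_sup[OF mem_grid_cube_dyadic_cell] cube_sup_nonneg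
    by (simp add: frob_eq_norm)
qed

context
  fixes g :: "real ^ 'n \<Rightarrow> real ^ 'n"
  assumes hess: "\<And>x. (g has_derivative (\<lambda>h. Hs x *v h)) (at x)"
begin

lemma norm_diff_le_cube_sup:
  assumes "x \<in> grid_cube n \<alpha>" "y \<in> grid_cube n \<alpha>"
  shows "norm (g x - g y) \<le> cube_sup Hs n \<alpha> * norm (x - y)"
proof (rule differentiable_bound[OF _ _ _ assms])
  show "convex (grid_cube n \<alpha>)"
    by (simp add: grid_cube_eq_cbox)
  fix z assume z: "z \<in> grid_cube n \<alpha>"
  show "(g has_derivative (*v) (Hs z)) (at z within grid_cube n \<alpha>)"
    using hess by (rule has_derivative_at_withinI)
  show "onorm ((*v) (Hs z)) \<le> cube_sup Hs n \<alpha>"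
    using onorm_matrix_vector_mult_le[of "Hs z"] frob_le_cube_sup[OF z]
    unfolding frob_eq_norm by linarith
qed

lemma norm_grid_pt_approx:
  assumes "y \<in> grid_cube n \<alpha>"
  shows "\<bar>norm (g (grid_pt n \<alpha>)) - norm (g y)\<bar> \<le> CARD('n) / 2 ^ n * cube_sup Hs n \<alpha>"
proof -
  have "\<bar>norm (g (grid_pt n \<alpha>)) - norm (g y)\<bar> \<le> norm (g (grid_pt n \<alpha>) - g y)"
    by (rule norm_triangle_ineq3)
  also have "\<dots> \<le> cube_sup Hs n \<alpha> * norm (grid_pt n \<alpha> - y)"
    by (rule norm_diff_le_cube_sup[OF grid_pt_mem_grid_cube assms])
  also have "\<dots> \<le> cube_sup Hs n \<alpha> * (CARD('n) / 2 ^ n)"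
    by (intro mult_left_mono norm_diff_grid_cube_le[OF grid_pt_mem_grid_cube assms] cube_sup_nonneg)
  finally show ?thesis
    by (simp add: mult.commute)
qed

context
  assumes grad_int: "integrable lborel (\<lambda>x. norm (g x))"
begin

lemma
  assumes Hfin: "Hn n Hs < \<infinity>"
  shows riemann_term_summable_of_Hn_finite: "riemann_term g n summable_on UNIV"
    and riemann_sum_error_le: "\<bar>infsum (riemann_term g n) UNIV - (\<integral>x. norm (g x) \<partial>lborel)\<bar>
           \<le> CARD('n) / 2 ^ n * enn2real (Hn n Hs)"
proof -
  define c :: real where "c = CARD('n) / 2 ^ n"
  let ?E = "\<lambda>y. cube_sup Hs n (dyadic_cell n y)"
  let ?A = "\<lambda>y. norm (g (grid_pt n (dyadic_cell n y)))"
  have Eint: "integrable lborel ?E"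
    by (rule integrable_cube_sup_step[OF Hfin])
  have approx: "\<bar>?A y - norm (g y)\<bar> \<le> c * ?E y" for y
    unfolding c_def using norm_grid_pt_approx[OF mem_grid_cube_dyadic_cell] .
  have Ameas: "?A \<in> borel_measurable lborel"
    by (rule measurable_compose[OF measurable_dyadic_cell]) simp
  have Aint: "integrable lborel ?A"
  proof (rule Bochner_Integration.integrable_bound[OF _ Ameas])
    show "integrable lborel (\<lambda>y. norm (g y) + c * ?E y)"
      by (intro Bochner_Integration.integrable_add grad_int integrable_mult_right Eint)
    show "AE y in lborel. norm (?A y) \<le> norm (norm (g y) + c * ?E y)"
    proof (rule AE_I2)
      fix y
      have "0 \<le> c * ?E y"
        unfolding c_def using cube_sup_nonneg by simp
      then show "norm (?A y) \<le> norm (norm (g y) + c * ?E y)"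
        using approx[of y] by (simp add: abs_le_iff)
    qed
  qed
  show "riemann_term g n summable_on UNIV"
    using summable_dyadic_step[OF _ Aint] by (simp add: riemann_term_def[abs_def])
  have "(\<integral>y. ?A y \<partial>lborel) = infsum (riemann_term g n) UNIV"
    using integral_dyadic_step[OF _ Aint] by (simp add: riemann_term_def[abs_def])
  then have "infsum (riemann_term g n) UNIV - (\<integral>x. norm (g x) \<partial>lborel) = (\<integral>y. ?A y - norm (g y) \<partial>lborel)"
    using Aint grad_int by simp
  also have "\<bar>\<dots>\<bar> \<le> (\<integral>y. c * ?E y \<partial>lborel)"
    using Aint grad_int Eint approx by (intro integral_abs_bound_integral) auto
  also have "\<dots> = c * enn2real (Hn n Hs)"
    by (simp add: integral_cube_sup_step[OF Hfin])
  finally show "\<bar>infsum (riemann_term g n) UNIV - (\<integral>x. norm (g x) \<partial>lborel)\<bar> \<le> c * enn2real (Hn n Hs)" .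
qed

lemma riemann_term_le_coarser:
  fixes \<alpha> :: "int ^ 'n"
  assumes "n \<le> m"
  defines "\<beta> \<equiv> dyadic_cell m (grid_pt n \<alpha>)"
  shows "riemann_term g n \<alpha>
    \<le> 2 ^ ((m - n) * CARD('n)) * (riemann_term g m \<beta> + CARD('n) * (inverse (2 ^ (m * CARD('n))) * cube_sup Hs m \<beta>))"
proof -
  let ?E = "cube_sup Hs m \<beta>"
  have "\<bar>norm (g (grid_pt m \<beta>)) - norm (g (grid_pt n \<alpha>))\<bar> \<le> CARD('n) / 2 ^ m * ?E"
    unfolding \<beta>_def by (rule norm_grid_pt_approx[OF mem_grid_cube_dyadic_cell])
  moreover have "CARD('n) / 2 ^ m * ?E \<le> CARD('n) * ?E"
  proof -
    have "CARD('n) * ?E * 1 \<le> CARD('n) * ?E * 2 ^ m"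
      using cube_sup_nonneg by (intro mult_left_mono) simp_all
    then show ?thesis
      by (simp add: divide_le_eq)
  qed
  ultimately have "norm (g (grid_pt n \<alpha>)) \<le> norm (g (grid_pt m \<beta>)) + CARD('n) * ?E"
    by linarith
  then have "riemann_term g n \<alpha> \<le> inverse (2 ^ (n * CARD('n))) * (norm (g (grid_pt m \<beta>)) + CARD('n) * ?E)"
    unfolding riemann_term_def by (simp add: mult_left_mono)
  also have "inverse ((2::real) ^ (n * CARD('n))) = 2 ^ ((m - n) * CARD('n)) * inverse (2 ^ (m * CARD('n)))"
  proof -
    have "m * CARD('n) = (m - n) * CARD('n) + n * CARD('n)"
      using assms by (simp flip: add_mult_distrib)
    then show ?thesis
      by (simp add: power_add)
  qed
  finally show ?thesis
    by (simp add: riemann_term_def algebra_simps)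
qed

lemma riemann_term_summable_coarser:
  assumes nm: "n \<le> m" and Hfin: "Hn m Hs < \<infinity>"
  shows "riemann_term g n summable_on UNIV"
proof -
  define v where "v \<beta> = riemann_term g m \<beta> + CARD('n) * (inverse (2 ^ (m * CARD('n))) * cube_sup Hs m \<beta>)"
    for \<beta>
  have "(\<lambda>\<beta>. CARD('n) * (inverse (2 ^ (m * CARD('n))) * cube_sup Hs m \<beta>)) summable_on UNIV"
    using cube_sup_summable[OF Hfin] by (rule summable_on_cmult_right)
  with riemann_term_summable_of_Hn_finite[OF Hfin] have "v summable_on UNIV"
    unfolding v_def by (rule summable_on_add)
  then have "v summable_on range (\<lambda>\<alpha>. dyadic_cell m (grid_pt n \<alpha>))"
    by (rule summable_on_subset_banach) simp
  then have "(v \<circ> (\<lambda>\<alpha>. dyadic_cell m (grid_pt n \<alpha>))) summable_on UNIV"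
    by (rule summable_on_reindex[OF inj_dyadic_cell_grid_pt[OF nm], THEN iffD1])
  then have "(\<lambda>\<alpha>. 2 ^ ((m - n) * CARD('n)) * v (dyadic_cell m (grid_pt n \<alpha>))) summable_on UNIV"
    unfolding comp_def by (rule summable_on_cmult_right)
  then show ?thesis
    using riemann_term_le_coarser[OF nm] unfolding v_def
    by (rule summable_on_comparison_test) (simp add: riemann_term_def)
qed

lemma riemann_term_summable:
  assumes "Hn m Hs < \<infinity>"
  shows "riemann_term g n summable_on UNIV"
proof (cases "m \<le> n")
  case True
  have "Hn n Hs < \<infinity>"
    using Hn_antimono[OF True] assms by (rule le_less_trans)
  then show ?thesis
    by (rule riemann_term_summable_of_Hn_finite)
next
  case False
  then show ?thesis
    using assms by (intro riemann_term_summable_coarser) simp_all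
qed

lemma riemann_sum_error_pow2_bound:
  assumes Hfin: "Hn m Hs < \<infinity>"
  obtains B where "\<And>n. \<bar>infsum (riemann_term g n) UNIV - (\<integral>x. norm (g x) \<partial>lborel)\<bar> \<le> B / 2 ^ n"
proof -
  have "\<bar>infsum (riemann_term g n) UNIV - (\<integral>x. norm (g x) \<partial>lborel)\<bar>
      \<le> CARD('n) * enn2real (Hn m Hs) / 2 ^ n" if "m \<le> n" for n
  proof -
    have Hmono: "Hn n Hs \<le> Hn m Hs"
      using that by (rule Hn_antimono)
    have "\<bar>infsum (riemann_term g n) UNIV - (\<integral>x. norm (g x) \<partial>lborel)\<bar>
        \<le> CARD('n) / 2 ^ n * enn2real (Hn n Hs)"
      using Hmono Hfin by (intro riemann_sum_error_le) (rule le_less_trans)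
    also have "\<dots> \<le> CARD('n) / 2 ^ n * enn2real (Hn m Hs)"
      using Hmono Hfin by (intro mult_left_mono enn2real_mono) simp_all
    finally show ?thesis
      by simp
  qed
  then show ?thesis
    using that by (rule pow2_bound_from_eventual)
qed

lemma grad_eq_0_if_hessian_integral_eq_0:
  assumes "integrable lborel (\<lambda>x. frob (Hs x))" and "(\<integral>x. frob (Hs x) \<partial>lborel) = 0"
  shows "g x = 0"
proof -
  have "Hs \<in> borel_measurable lborel"
    using cont by (simp add: borel_measurable_continuous_onI)
  then have "emeasure lborel {x. Hs x \<noteq> 0} = 0"
    using assms integral_norm_eq_0_iff[of lborel Hs] integrable_norm_iff[of Hs lborel]
    by (simp add: frob_eq_norm)
  moreover have "open {x. Hs x \<noteq> 0}"
    using cont by (intro open_Collect_neq) simp_all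
  ultimately have "negligible {x. Hs x \<noteq> 0}"
    by (auto simp: negligible_iff_null_sets intro!: null_sets_completionI null_setsI)
  then have Hs0: "Hs y = 0" for y
    using open_not_negligible \<open>open {x. Hs x \<noteq> 0}\<close> by blast
  have "\<exists>c. \<forall>y\<in>UNIV. g y = c"
    using hess by (intro has_derivative_zero_constant) (simp_all add: Hs0 has_derivative_at_withinI)
  then obtain c where c: "\<And>y. g y = c"
    by blast
  have "(\<integral>\<^sup>+y. ennreal (norm c) \<partial>lborel) < \<infinity>"
    using grad_int by (simp add: integrable_iff_bounded c)
  then have "c = 0"
    by (auto simp: ennreal_mult_top split: if_splits)
  then show ?thesis
    by (simp add: c)
qed

lemma riemann_sum_error_le_hessian_integral:
  assumes Hfin: "Hn m Hs < \<infinity>"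
  obtains C where "C > 0"
    and "\<And>n. \<bar>infsum (riemann_term g n) UNIV - (\<integral>x. norm (g x) \<partial>lborel)\<bar>
              \<le> C * inverse (2 ^ n) * (\<integral>x. frob (Hs x) \<partial>lborel)"
proof -
  obtain B where B: "\<And>n. \<bar>infsum (riemann_term g n) UNIV - (\<integral>x. norm (g x) \<partial>lborel)\<bar> \<le> B / 2 ^ n"
    using riemann_sum_error_pow2_bound[OF Hfin] by blast
  define I where "I = (\<integral>x. frob (Hs x) \<partial>lborel)"
  have fint: "integrable lborel (\<lambda>x. frob (Hs x))"
    by (rule integrable_frob_hessian[OF Hfin])
  have "0 \<le> I"
    unfolding I_def by (simp add: frob_eq_norm)
  then consider "I = 0" | "I > 0"
    by linarith
  then show ?thesis
  proof cases
    case 1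
    then have g0: "g x = 0" for x
      using fint by (intro grad_eq_0_if_hessian_integral_eq_0) (simp_all add: I_def)
    then have "riemann_term g n = (\<lambda>_. 0)" for n
      by (simp add: riemann_term_def fun_eq_iff)
    then show ?thesis
      using 1 by (intro that[of 1]) (simp_all add: g0 I_def)
  next
    case 2
    define C where "C = max B 0 / I + 1"
    have "0 < C"
      using 2 by (simp add: C_def add_nonneg_pos)
    moreover have "B / 2 ^ n \<le> C * inverse (2 ^ n) * I" for n
    proof -
      have "C * I = max B 0 + I"
        using 2 by (simp add: C_def field_simps)
      then have "B \<le> C * I"
        using 2 by linarith
      then show ?thesis
        by (simp add: field_simps)
    qed
    ultimately show ?thesis
      using B that unfolding I_def by (meson order_trans)
  qed
qed

end

end

end

theorem lemma4p5:
  fixes f :: "real ^ 'n \<Rightarrow> real"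
    and g :: "real ^ 'n \<Rightarrow> real ^ 'n"
    and Hs :: "real ^ 'n \<Rightarrow> real ^ 'n ^ 'n"
  assumes grad: "\<And>x. (f has_derivative (\<lambda>h. g x \<bullet> h)) (at x)"
    and hess: "\<And>x. (g has_derivative (\<lambda>h. Hs x *v h)) (at x)"
    and hess_cont: "continuous_on UNIV Hs"
    and Hfin: "\<exists>m. Hn m Hs < \<infinity>"
    and grad_int: "integrable lborel (\<lambda>x. norm (g x))"
  shows "\<forall>n0::nat. \<exists>C>0. \<forall>n\<ge>n0.
           (\<lambda>\<alpha>::int ^ 'n. inverse (2 ^ (n * CARD('n))) * norm (g (grid_pt n \<alpha>))) summable_on UNIV
         \<and> integrable lborel (\<lambda>x. frob (Hs x))
         \<and> \<bar>(\<Sum>\<^sub>\<infinity>\<alpha>\<in>(UNIV :: (int ^ 'n) set). inverse (2 ^ (n * CARD('n))) * norm (g (grid_pt n \<alpha>)))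
              - (\<integral>x. norm (g x) \<partial>lborel)\<bar>
           \<le> C * inverse (2 ^ n) * (\<integral>x. frob (Hs x) \<partial>lborel)"
proof -
  \<comment> \<open>The hypothesis grad only identifies g as the gradient of f; the estimate concerns g alone.\<close>
  obtain m where Hm: "Hn m Hs < \<infinity>"
    using Hfin by blast
  obtain C where "C > 0" and C: "\<And>n. \<bar>infsum (riemann_term g n) UNIV - (\<integral>x. norm (g x) \<partial>lborel)\<bar>
      \<le> C * inverse (2 ^ n) * (\<integral>x. frob (Hs x) \<partial>lborel)"
    using riemann_sum_error_le_hessian_integral[OF hess_cont hess grad_int Hm] by blast
  have "riemann_term g n summable_on UNIV" for n
    by (rule riemann_term_summable[OF hess_cont hess grad_int Hm])
  moreover have "integrable lborel (\<lambda>x. frob (Hs x))"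
    by (rule integrable_frob_hessian[OF hess_cont Hm])
  ultimately show ?thesis
    using \<open>C > 0\<close> C unfolding riemann_term_def[abs_def] by blast
qed

end
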